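(* Let $G$ be a $B_2$-EPG graph given with a representation, let $a$ be a row, and let $X$ be a nonempty clique of $G$ consisting only of U-vertices, all with index $\{a\}$. Then there is a set $S_t$ of at most three typed intervals such that: (1) $S_t$ contains exactly one horizontal typed interval (on row $a$) and at most two vertical typed intervals; (2) every vertex of $X$ contains every typed interval of $S_t$; (3) a Z-vertex $u$ is adjacent to every vertex of $X$ if and only if $u$ intersects at least one of the typed intervals of $S_t$.
   Context: A graph $G$ is a $B_k$-EPG graph if each vertex $u$ can be assigned a path $P_u$ in the planar orthogonal grid with at most $k$ bends such that $uv\in E(G)$ iff $P_u$ and $P_v$ share at least one grid edge (a representation); for $B_2$-EPG graphs one assumes w.l.o.g. every path has exactly two bends. A vertex $u$ intersects a row (column) if $P_u$ contains a grid edge of it; the index of $u$ is the set of rows it intersects. A Z-vertex intersects exactly two rows and one column; a U-vertex intersects exactly one row and two columns. If $a$ is in the index of $u$, $P_u^a$ is the segment of row $a$ between the two points of row $a$ where $P_u$ stops or bends. Types: $\emptyset$, $\mathsf d$, $\mathsf u$. A typed interval on row $a$ is $[x\alpha, y\beta]$ with $\alpha\le\beta$ points of row $a$ and $x,y$ types. For typed intervals $t=[x\alpha,y\beta]$, $t'=[x'\alpha',y'\beta']$ on row $a$ and an endpoint $z\gamma\in\{x'\alpha',y'\beta'\}$ of $t'$, $t$ is coherent with $z\gamma$ if (i) $\gamma\in(\alpha,\beta)$ (open interval), or (ii) $z=\emptyset$ and $[\alpha,\beta]$ contains the grid edge of $[\alpha',\beta']$ incident to $\gamma$, or (iii) $z\neq\emptyset$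 and $z\gamma\in\{x\alpha,y\beta\}$. $t$ contains $t'$ if $[\alpha',\beta']\subseteq[\alpha,\beta]$ and $t$ is coherent with both endpoints of $t'$. $t$ intersects $t'$ if $[\alpha,\beta]\cap[\alpha',\beta']$ contains a grid edge, or $t$ is coherent with an endpoint of $t'$, or $t'$ is coherent with an endpoint of $t$. The t-projection of $u$ on $a$ is $[x\alpha,y\beta]$ where $\alpha,\beta$ are the endpoints of $P_u^a$ and the type of an endpoint $\gamma$ is $\emptyset$ if $P_u$ ends at $\gamma$, $\mathsf d$ if $P_u$ bends downwards at $\gamma$, $\mathsf u$ if upwards. A vertex $u$ contains (intersects) a typed interval $t$ on row $a$ if $a$ is in the index of $u$ and its t-projection on $a$ contains (intersects) $t$. Typed intervals on rows are called horizontal typed intervals. Vertical typed intervals (on a column), the t-projection of a vertex on a column it intersects, and containment/intersection of vertical typed intervals by vertices are defined identically after rotating the grid by $90^\circ$ (columns becoming rows). *)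

theory Defs
  imports Main
begin

(* Grid points: (x, y) with x the column coordinate and y the row coordinate.
   Row a = horizontal grid line y = a; column c = vertical grid line x = c.
   "Downwards" means towards smaller y. *)
type_synonym pt = "int \<times> int"

(* types of endpoints: TE = \<emptyset> (path ends), TD = d (bends downwards), TU = u (bends upwards) *)
datatype ttype = TE | TD | TU

(* typed interval [x\<alpha>, y\<beta>] on a line, stored as (x, \<alpha>, y, \<beta>) *)
type_synonym tiv = "ttype \<times> int \<times> ttype \<times> int"

datatype orient = Hor | Ver

(* a typed interval together with its line: (Hor, a, t) is on row a, (Ver, c, t) on column c *)
type_synonym ltiv = "orient \<times> int \<times> tiv"

definition wf_tiv :: "tiv \<Rightarrow> bool" where
  "wf_tiv t = (case t of (x, \<alpha>, y, \<beta>) \<Rightarrow> \<alpha> \<le> \<beta>)"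

(* t is coherent with the left endpoint x'\<alpha>' of t' *)
definition coh_L :: "tiv \<Rightarrow> tiv \<Rightarrow> bool" where
  "coh_L t t' = (case t of (x, \<alpha>, y, \<beta>) \<Rightarrow> case t' of (x', \<alpha>', y', \<beta>') \<Rightarrow>
      (\<alpha> < \<alpha>' \<and> \<alpha>' < \<beta>)
    \<or> (x' = TE \<and> \<alpha>' < \<beta>' \<and> \<alpha> \<le> \<alpha>' \<and> \<alpha>' + 1 \<le> \<beta>)
    \<or> (x' \<noteq> TE \<and> ((x', \<alpha>') = (x, \<alpha>) \<or> (x', \<alpha>') = (y, \<beta>))))"

(* t is coherent with the right endpoint y'\<beta>' of t' *)
definition coh_R :: "tiv \<Rightarrow> tiv \<Rightarrow> bool" where
  "coh_R t t' = (case t of (x, \<alpha>, y, \<beta>) \<Rightarrow> case t' of (x', \<alpha>', y', \<beta>') \<Rightarrow>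
      (\<alpha> < \<beta>' \<and> \<beta>' < \<beta>)
    \<or> (y' = TE \<and> \<alpha>' < \<beta>' \<and> \<alpha> \<le> \<beta>' - 1 \<and> \<beta>' \<le> \<beta>)
    \<or> (y' \<noteq> TE \<and> ((y', \<beta>') = (x, \<alpha>) \<or> (y', \<beta>') = (y, \<beta>))))"

definition contains_ti :: "tiv \<Rightarrow> tiv \<Rightarrow> bool" where
  "contains_ti t t' = (case t of (x, \<alpha>, y, \<beta>) \<Rightarrow> case t' of (x', \<alpha>', y', \<beta>') \<Rightarrow>
      \<alpha> \<le> \<alpha>' \<and> \<beta>' \<le> \<beta> \<and> coh_L t t' \<and> coh_R t t')"

definition intersects_ti :: "tiv \<Rightarrow> tiv \<Rightarrow> bool" where
  "intersects_ti t t' = (case t of (x, \<alpha>, y, \<beta>) \<Rightarrow> case t' of (x', \<alpha>', y', \<beta>') \<Rightarrow>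
      max \<alpha> \<alpha>' + 1 \<le> min \<beta> \<beta>'
    \<or> coh_L t t' \<or> coh_R t t' \<or> coh_L t' t \<or> coh_R t' t)"

(* grid edges are unordered pairs of grid-adjacent points *)
definition seg_edges :: "pt \<Rightarrow> pt \<Rightarrow> pt set set" where
  "seg_edges p q =
    (if snd p = snd q then
       {{(i, snd p), (i + 1, snd p)} | i. min (fst p) (fst q) \<le> i \<and> i < max (fst p) (fst q)}
     else if fst p = fst q then
       {{(fst p, j), (fst p, j + 1)} | j. min (snd p) (snd q) \<le> j \<and> j < max (snd p) (snd q)}
     else {})"

(* a path is given by its list of points: start, bend points, end *)
definition path_edges :: "pt list \<Rightarrow> pt set set" where
  "path_edges ps = (\<Union>i \<in> {i. Suc i < length ps}. seg_edges (ps ! i) (ps ! Suc i))"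

definition is_B2_path :: "pt list \<Rightarrow> bool" where
  "is_B2_path ps = (length ps = 4
     \<and> (\<forall>i<3. ps ! i \<noteq> ps ! Suc i \<and>
              (fst (ps ! i) = fst (ps ! Suc i) \<or> snd (ps ! i) = snd (ps ! Suc i)))
     \<and> (\<forall>i<2. (fst (ps ! i) = fst (ps ! Suc i)) \<noteq> (fst (ps ! Suc i) = fst (ps ! Suc (Suc i)))))"

definition row_edge :: "int \<Rightarrow> pt set \<Rightarrow> bool" where
  "row_edge a e = (\<exists>i. e = {(i, a), (i + 1, a)})"

(* index of a vertex: the rows it intersects *)
definition row_index :: "pt list \<Rightarrow> int set" where
  "row_index ps = {a. \<exists>e \<in> path_edges ps. row_edge a e}"

(* rotation of the grid by 90 degrees: column c becomes row c *)
definition rot :: "pt \<Rightarrow> pt" where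
  "rot p = (- snd p, fst p)"

definition col_index :: "pt list \<Rightarrow> int set" where
  "col_index ps = row_index (map rot ps)"

definition Z_vertex :: "pt list \<Rightarrow> bool" where
  "Z_vertex ps = (card (row_index ps) = 2 \<and> card (col_index ps) = 1)"

definition U_vertex :: "pt list \<Rightarrow> bool" where
  "U_vertex ps = (card (row_index ps) = 1 \<and> card (col_index ps) = 2)"

definition horiz_seg :: "pt list \<Rightarrow> int \<Rightarrow> nat \<Rightarrow> bool" where
  "horiz_seg ps a i = (Suc i < length ps \<and> snd (ps ! i) = a \<and> snd (ps ! Suc i) = a
                        \<and> fst (ps ! i) \<noteq> fst (ps ! Suc i))"

(* type of a bend at point p whose other segment goes to q *)
definition bend_ty :: "pt \<Rightarrow> pt \<Rightarrow> ttype" where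
  "bend_ty q p = (if snd q < snd p then TD else TU)"

definition seg_tproj :: "pt list \<Rightarrow> nat \<Rightarrow> tiv" where
  "seg_tproj ps i =
    (let x1 = fst (ps ! i); x2 = fst (ps ! Suc i);
         t1 = (if i = 0 then TE else bend_ty (ps ! (i - 1)) (ps ! i));
         t2 = (if Suc (Suc i) < length ps then bend_ty (ps ! Suc (Suc i)) (ps ! Suc i) else TE)
     in if x1 \<le> x2 then (t1, x1, t2, x2) else (t2, x2, t1, x1))"

definition tproj_row :: "pt list \<Rightarrow> int \<Rightarrow> tiv" where
  "tproj_row ps a = seg_tproj ps (THE i. horiz_seg ps a i)"

definition tproj_col :: "pt list \<Rightarrow> int \<Rightarrow> tiv" where
  "tproj_col ps c = tproj_row (map rot ps) c"

fun v_contains :: "pt list \<Rightarrow> ltiv \<Rightarrow> bool" where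
  "v_contains ps (Hor, a, t) = (a \<in> row_index ps \<and> contains_ti (tproj_row ps a) t)"
| "v_contains ps (Ver, c, t) = (c \<in> col_index ps \<and> contains_ti (tproj_col ps c) t)"

fun v_intersects :: "pt list \<Rightarrow> ltiv \<Rightarrow> bool" where
  "v_intersects ps (Hor, a, t) = (a \<in> row_index ps \<and> intersects_ti (tproj_row ps a) t)"
| "v_intersects ps (Ver, c, t) = (c \<in> col_index ps \<and> intersects_ti (tproj_col ps c) t)"

definition epg_rep :: "'v set \<Rightarrow> ('v \<Rightarrow> 'v \<Rightarrow> bool) \<Rightarrow> ('v \<Rightarrow> pt list) \<Rightarrow> bool" where
  "epg_rep V E P = ((\<forall>u\<in>V. is_B2_path (P u))
     \<and> (\<forall>u\<in>V. \<forall>v\<in>V. u \<noteq> v \<longrightarrow> (E u v \<longleftrightarrow> path_edges (P u) \<inter> path_edges (P v) \<noteq> {})))"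

end

theory Submission
  imports Defs
begin

text \<open>
  A U-vertex with index \<open>{a}\<close> is a horizontal segment \<open>[l, r]\<close> of row \<open>a\<close> together with two
  vertical segments on columns \<open>l\<close> and \<open>r\<close>, each leaving row \<open>a\<close> upwards or downwards. Two such
  vertices share a grid edge iff their horizontal segments overlap or they use a common column and
  bend the same way there. Hence all horizontal segments of the clique contain
  \<open>[max l, min r]\<close>; typing each endpoint with the bend shared by all vertices turning there
  (if any) gives the horizontal typed interval.

  A Z-vertex meets a U-vertex only on row \<open>a\<close> or on one of its two columns. If it meets all of
  the clique on columns only, its column is a column of every vertex of the clique (so there are at
  most two candidates), and meeting every vertical segment on that column amounts to meeting the
  shortest one: from row \<open>a\<close> to the nearest far end if all segments go the same way, and just
  the bend point on row \<open>a\<close> otherwise. These give the vertical typed intervals.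
\<close>

section \<open>Grid edges of B2-paths\<close>

definition row_edges :: "int \<Rightarrow> int \<Rightarrow> int \<Rightarrow> pt set set" where
  "row_edges y lo hi = {{(i, y), (i + 1, y)} | i. lo \<le> i \<and> i < hi}"

definition col_edges :: "int \<Rightarrow> int \<Rightarrow> int \<Rightarrow> pt set set" where
  "col_edges x lo hi = {{(x, j), (x, j + 1)} | j. lo \<le> j \<and> j < hi}"

lemma seg_edges_row: "seg_edges (x, y) (x', y) = row_edges y (min x x') (max x x')"
  by (simp add: seg_edges_def row_edges_def)

lemma seg_edges_col: "y \<noteq> y' \<Longrightarrow> seg_edges (x, y) (x, y') = col_edges x (min y y') (max y y')"
  by (simp add: seg_edges_def col_edges_def)

lemma path_edges_four_points:
  "path_edges [p0, p1, p2, p3] = seg_edges p0 p1 \<union> seg_edges p1 p2 \<union> seg_edges p2 p3"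
proof -
  have "{i. Suc i < length [p0, p1, p2, p3]} = {0, 1, 2}" by auto
  then show ?thesis unfolding path_edges_def by (auto simp: numeral_eq_Suc)
qed

lemma row_edge_eq_iff: "{(i::int, y::int), (i + 1, y)} = {(i', y'), (i' + 1, y')} \<longleftrightarrow> i = i' \<and> y = y'"
  by (simp add: doubleton_eq_iff) arith

lemma col_edge_eq_iff: "{(x::int, j::int), (x, j + 1)} = {(x', j'), (x', j' + 1)} \<longleftrightarrow> x = x' \<and> j = j'"
  by (simp add: doubleton_eq_iff) arith

lemma row_edge_neq_col_edge: "{(i::int, y::int), (i + 1, y)} \<noteq> {(x, j), (x, j + 1)}"
  by (simp add: doubleton_eq_iff)

lemma row_edges_overlap_iff:
  "row_edges y lo hi \<inter> row_edges y' lo' hi' \<noteq> {} \<longleftrightarrow> y = y' \<and> max lo lo' < min hi hi'"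
proof
  assume "row_edges y lo hi \<inter> row_edges y' lo' hi' \<noteq> {}"
  then show "y = y' \<and> max lo lo' < min hi hi'" by (auto simp: row_edges_def row_edge_eq_iff)
next
  assume "y = y' \<and> max lo lo' < min hi hi'"
  then have "{(max lo lo', y), (max lo lo' + 1, y)} \<in> row_edges y lo hi \<inter> row_edges y' lo' hi'"
    by (auto simp: row_edges_def)
  then show "row_edges y lo hi \<inter> row_edges y' lo' hi' \<noteq> {}" by blast
qed

lemma col_edges_overlap_iff:
  "col_edges x lo hi \<inter> col_edges x' lo' hi' \<noteq> {} \<longleftrightarrow> x = x' \<and> max lo lo' < min hi hi'"
proof
  assume "col_edges x lo hi \<inter> col_edges x' lo' hi' \<noteq> {}"
  then show "x = x' \<and> max lo lo' < min hi hi'" by (auto simp: col_edges_def col_edge_eq_iff)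
next
  assume "x = x' \<and> max lo lo' < min hi hi'"
  then have "{(x, max lo lo'), (x, max lo lo' + 1)} \<in> col_edges x lo hi \<inter> col_edges x' lo' hi'"
    by (auto simp: col_edges_def)
  then show "col_edges x lo hi \<inter> col_edges x' lo' hi' \<noteq> {}" by blast
qed

lemma row_edges_Int_col_edges: "row_edges y lo hi \<inter> col_edges x lo' hi' = {}"
  and col_edges_Int_row_edges: "col_edges x lo' hi' \<inter> row_edges y lo hi = {}"
  by (auto simp: row_edges_def col_edges_def row_edge_neq_col_edge row_edge_neq_col_edge[symmetric])

lemma rows_of_row_edges: "{b. \<exists>e\<in>row_edges y lo hi. row_edge b e} = (if lo < hi then {y} else {})"
  by (auto simp: row_edges_def row_edge_def row_edge_eq_iff)

lemma rows_of_col_edges: "{b. \<exists>e\<in>col_edges x lo hi. row_edge b e} = {}"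
  by (auto simp: col_edges_def row_edge_def row_edge_neq_col_edge[symmetric])

lemma B2_path_cases:
  assumes "is_B2_path ps"
  obtains (U) c1 y0 b c2 y3 where "ps = [(c1, y0), (c1, b), (c2, b), (c2, y3)]" "c1 \<noteq> c2" "y0 \<noteq> b" "y3 \<noteq> b"
    | (Z) x0 y1 c y2 x3 where "ps = [(x0, y1), (c, y1), (c, y2), (x3, y2)]" "x0 \<noteq> c" "y1 \<noteq> y2" "x3 \<noteq> c"
proof -
  from assms obtain x0 y0 x1 y1 x2 y2 x3 y3 where ps: "ps = [(x0, y0), (x1, y1), (x2, y2), (x3, y3)]"
    by (auto simp: is_B2_path_def length_Suc_conv numeral_eq_Suc)
  show thesis using assms that unfolding ps is_B2_path_def
    by (cases "x0 = x1") (auto simp: numeral_eq_Suc All_less_Suc)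
qed

lemma Z_path_edges: "x0 \<noteq> c \<Longrightarrow> y1 \<noteq> y2 \<Longrightarrow> x3 \<noteq> c \<Longrightarrow>
  path_edges [(x0, y1), (c, y1), (c, y2), (x3, y2)] =
    row_edges y1 (min x0 c) (max x0 c) \<union> col_edges c (min y1 y2) (max y1 y2) \<union> row_edges y2 (min c x3) (max c x3)"
  by (simp add: path_edges_four_points seg_edges_row seg_edges_col)

lemma U_path_edges: "c1 \<noteq> c2 \<Longrightarrow> y0 \<noteq> b \<Longrightarrow> y3 \<noteq> b \<Longrightarrow>
  path_edges [(c1, y0), (c1, b), (c2, b), (c2, y3)] =
    col_edges c1 (min y0 b) (max y0 b) \<union> row_edges b (min c1 c2) (max c1 c2) \<union> col_edges c2 (min b y3) (max b y3)"
  by (simp add: path_edges_four_points seg_edges_row seg_edges_col)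

lemma Z_path_rows: "x0 \<noteq> c \<Longrightarrow> y1 \<noteq> y2 \<Longrightarrow> x3 \<noteq> c \<Longrightarrow>
  row_index [(x0, y1), (c, y1), (c, y2), (x3, y2)] = {y1, y2}"
  unfolding row_index_def by (auto simp add: Z_path_edges bex_Un Collect_disj_eq rows_of_row_edges rows_of_col_edges)

lemma U_path_rows: "c1 \<noteq> c2 \<Longrightarrow> y0 \<noteq> b \<Longrightarrow> y3 \<noteq> b \<Longrightarrow>
  row_index [(c1, y0), (c1, b), (c2, b), (c2, y3)] = {b}"
  unfolding row_index_def by (simp add: U_path_edges bex_Un Collect_disj_eq rows_of_row_edges rows_of_col_edges)

lemma Z_path_horiz_seg: "x0 \<noteq> c \<Longrightarrow> y1 \<noteq> y2 \<Longrightarrow> x3 \<noteq> c \<Longrightarrow>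
  horiz_seg [(x0, y1), (c, y1), (c, y2), (x3, y2)] r i \<longleftrightarrow> (i = 0 \<and> r = y1) \<or> (i = 2 \<and> r = y2)"
  unfolding horiz_seg_def by (cases i; cases "i - 1"; cases "i - 2"; auto)

lemma U_path_horiz_seg: "c1 \<noteq> c2 \<Longrightarrow> y0 \<noteq> b \<Longrightarrow> y3 \<noteq> b \<Longrightarrow>
  horiz_seg [(c1, y0), (c1, b), (c2, b), (c2, y3)] r i \<longleftrightarrow> (i = 1 \<and> r = b)"
  unfolding horiz_seg_def by (cases i; cases "i - 1"; cases "i - 2"; auto)

lemma Z_path_tproj_row1: "x0 \<noteq> c \<Longrightarrow> y1 \<noteq> y2 \<Longrightarrow> x3 \<noteq> c \<Longrightarrow>
  tproj_row [(x0, y1), (c, y1), (c, y2), (x3, y2)] y1 =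
   (let t = bend_ty (c, y2) (c, y1) in if x0 \<le> c then (TE, x0, t, c) else (t, c, TE, x0))"
  by (simp add: tproj_row_def Z_path_horiz_seg seg_tproj_def Let_def)

lemma Z_path_tproj_row2: "x0 \<noteq> c \<Longrightarrow> y1 \<noteq> y2 \<Longrightarrow> x3 \<noteq> c \<Longrightarrow>
  tproj_row [(x0, y1), (c, y1), (c, y2), (x3, y2)] y2 =
   (let t = bend_ty (c, y1) (c, y2) in if c \<le> x3 then (t, c, TE, x3) else (TE, x3, t, c))"
  by (simp add: tproj_row_def Z_path_horiz_seg seg_tproj_def Let_def numeral_eq_Suc)

lemma U_path_tproj_row: "c1 \<noteq> c2 \<Longrightarrow> y0 \<noteq> b \<Longrightarrow> y3 \<noteq> b \<Longrightarrow>
  tproj_row [(c1, y0), (c1, b), (c2, b), (c2, y3)] b =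
   (let t1 = bend_ty (c1, y0) (c1, b); t2 = bend_ty (c2, y3) (c2, b)
    in if c1 \<le> c2 then (t1, c1, t2, c2) else (t2, c2, t1, c1))"
  by (simp add: tproj_row_def U_path_horiz_seg seg_tproj_def Let_def)

text \<open>Rotating the grid exchanges the two shapes, so columns are handled by the row lemmas.\<close>

lemma rot_U_path: "map rot [(c1, y0), (c1, b), (c2, b), (c2, y3)] = [(-y0, c1), (-b, c1), (-b, c2), (-y3, c2)]"
  by (simp add: rot_def)

lemma rot_Z_path: "map rot [(x0, y1), (c, y1), (c, y2), (x3, y2)] = [(-y1, x0), (-y1, c), (-y2, c), (-y2, x3)]"
  by (simp add: rot_def)

lemma U_path_cols: "c1 \<noteq> c2 \<Longrightarrow> y0 \<noteq> b \<Longrightarrow> y3 \<noteq> b \<Longrightarrow>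
  col_index [(c1, y0), (c1, b), (c2, b), (c2, y3)] = {c1, c2}"
  unfolding col_index_def rot_U_path by (rule Z_path_rows) auto

lemma Z_path_cols: "x0 \<noteq> c \<Longrightarrow> y1 \<noteq> y2 \<Longrightarrow> x3 \<noteq> c \<Longrightarrow>
  col_index [(x0, y1), (c, y1), (c, y2), (x3, y2)] = {c}"
  unfolding col_index_def rot_Z_path by (rule U_path_rows) auto

lemma U_path_tproj_col1: "c1 \<noteq> c2 \<Longrightarrow> y0 \<noteq> b \<Longrightarrow> y3 \<noteq> b \<Longrightarrow>
  tproj_col [(c1, y0), (c1, b), (c2, b), (c2, y3)] c1 =
   (let t = bend_ty (-b, c2) (-b, c1) in if -y0 \<le> -b then (TE, -y0, t, -b) else (t, -b, TE, -y0))"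
  unfolding tproj_col_def rot_U_path by (rule Z_path_tproj_row1) auto

lemma U_path_tproj_col2: "c1 \<noteq> c2 \<Longrightarrow> y0 \<noteq> b \<Longrightarrow> y3 \<noteq> b \<Longrightarrow>
  tproj_col [(c1, y0), (c1, b), (c2, b), (c2, y3)] c2 =
   (let t = bend_ty (-b, c1) (-b, c2) in if -b \<le> -y3 then (t, -b, TE, -y3) else (TE, -y3, t, -b))"
  unfolding tproj_col_def rot_U_path by (rule Z_path_tproj_row2) auto

lemma Z_path_tproj_col: "x0 \<noteq> c \<Longrightarrow> y1 \<noteq> y2 \<Longrightarrow> x3 \<noteq> c \<Longrightarrow>
  tproj_col [(x0, y1), (c, y1), (c, y2), (x3, y2)] c =
   (let t1 = bend_ty (-y1, x0) (-y1, c); t2 = bend_ty (-y2, x3) (-y2, c)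
    in if -y1 \<le> -y2 then (t1, -y1, t2, -y2) else (t2, -y2, t1, -y1))"
  unfolding tproj_col_def rot_Z_path by (rule U_path_tproj_row) auto

section \<open>U-paths and Z-paths in normal form\<close>

definition bend_dir :: "int \<Rightarrow> int \<Rightarrow> ttype" where
  "bend_dir a y = (if y < a then TD else TU)"

lemma bend_dir_neq_TE: "bend_dir a y \<noteq> TE"
  by (simp add: bend_dir_def)

definition overlap :: "int \<Rightarrow> int \<Rightarrow> int \<Rightarrow> int \<Rightarrow> bool" where
  "overlap p q s t \<longleftrightarrow> max (min p q) (min s t) < min (max p q) (max s t)"

lemma overlap_swap: "overlap q p s t = overlap p q s t" "overlap p q t s = overlap p q s t"
  by (simp_all add: overlap_def min.commute max.commute)

lemma overlap_min_max: "overlap (min p q) (max p q) s t = overlap p q s t"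
  by (simp add: overlap_def)

definition U_form :: "int \<Rightarrow> pt list \<Rightarrow> int \<Rightarrow> int \<Rightarrow> int \<Rightarrow> int \<Rightarrow> bool" where
  "U_form a ps l r yl yr \<longleftrightarrow> l < r \<and> yl \<noteq> a \<and> yr \<noteq> a \<and> row_index ps = {a} \<and> col_index ps = {l, r}
     \<and> tproj_row ps a = (bend_dir a yl, l, bend_dir a yr, r)
     \<and> tproj_col ps l = (if a < yl then (TE, -yl, TU, -a) else (TU, -a, TE, -yl))
     \<and> tproj_col ps r = (if a < yr then (TE, -yr, TD, -a) else (TD, -a, TE, -yr))
     \<and> path_edges ps = col_edges l (min yl a) (max yl a) \<union> row_edges a l r \<union> col_edges r (min a yr) (max a yr)"

definition Z_row_tproj :: "int \<Rightarrow> int \<Rightarrow> ttype \<Rightarrow> tiv" where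
  "Z_row_tproj x0 c t = (if x0 \<le> c then (TE, x0, t, c) else (t, c, TE, x0))"

definition Z_col_tproj :: "int \<Rightarrow> int \<Rightarrow> int \<Rightarrow> int \<Rightarrow> int \<Rightarrow> tiv" where
  "Z_col_tproj x0 y1 c y2 x3 = (let t1 = (if x0 < c then TD else TU); t2 = (if x3 < c then TD else TU) in
     if y2 \<le> y1 then (t1, -y1, t2, -y2) else (t2, -y2, t1, -y1))"

definition Z_form :: "pt list \<Rightarrow> int \<Rightarrow> int \<Rightarrow> int \<Rightarrow> int \<Rightarrow> int \<Rightarrow> bool" where
  "Z_form ps x0 y1 c y2 x3 \<longleftrightarrow> x0 \<noteq> c \<and> y1 \<noteq> y2 \<and> x3 \<noteq> c \<and> row_index ps = {y1, y2} \<and> col_index ps = {c}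
     \<and> tproj_row ps y1 = Z_row_tproj x0 c (bend_dir y1 y2)
     \<and> tproj_row ps y2 = Z_row_tproj x3 c (bend_dir y2 y1)
     \<and> tproj_col ps c = Z_col_tproj x0 y1 c y2 x3
     \<and> path_edges ps = row_edges y1 (min x0 c) (max x0 c) \<union> col_edges c (min y1 y2) (max y1 y2)
                        \<union> row_edges y2 (min c x3) (max c x3)"

lemma Z_form_reverse: "Z_form ps x0 y1 c y2 x3 \<Longrightarrow> Z_form ps x3 y2 c y1 x0"
  unfolding Z_form_def Z_row_tproj_def Z_col_tproj_def Let_def
  by (auto simp: insert_commute min.commute max.commute Un_commute Un_left_commute)

lemma U_form_exists:
  assumes "is_B2_path ps" "U_vertex ps" "row_index ps = {a}"
  shows "\<exists>l r yl yr. U_form a ps l r yl yr"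
  using assms(1)
proof (cases rule: B2_path_cases)
  case (U c1 y0 b c2 y3)
  then have b: "b = a" using assms(3) U_path_rows by simp
  show ?thesis
  proof (cases "c1 < c2")
    case True
    then have "U_form a ps c1 c2 y0 y3" using U unfolding U_form_def b
      by (simp add: U_path_rows U_path_cols U_path_tproj_row U_path_tproj_col1 U_path_tproj_col2
          U_path_edges bend_dir_def bend_ty_def Let_def)
    then show ?thesis by blast
  next
    case False
    then have "U_form a ps c2 c1 y3 y0" using U unfolding U_form_def b
      by (auto simp add: U_path_rows U_path_cols U_path_tproj_row U_path_tproj_col1 U_path_tproj_col2
          U_path_edges bend_dir_def bend_ty_def Let_def)
    then show ?thesis by blast
  qed
next
  case (Z x0 y1 c y2 x3)
  then have "card (row_index ps) = 2" using Z_path_rows by simp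
  with assms(2) show ?thesis by (simp add: U_vertex_def)
qed

lemma Z_form_exists:
  assumes "is_B2_path ps" "Z_vertex ps"
  shows "\<exists>x0 y1 c y2 x3. Z_form ps x0 y1 c y2 x3"
  using assms(1)
proof (cases rule: B2_path_cases)
  case (U c1 y0 b c2 y3)
  then have "card (row_index ps) = 1" using U_path_rows by simp
  with assms(2) show ?thesis by (simp add: Z_vertex_def)
next
  case (Z x0 y1 c y2 x3)
  then have "Z_form ps x0 y1 c y2 x3" unfolding Z_form_def
    by (simp add: Z_path_rows Z_path_cols Z_path_tproj_row1 Z_path_tproj_row2 Z_path_tproj_col Z_path_edges
        Z_row_tproj_def Z_col_tproj_def bend_dir_def bend_ty_def Let_def)
  then show ?thesis by blast
qed

definition ZU_meet :: "int \<Rightarrow> int \<Rightarrow> int \<Rightarrow> int \<Rightarrow> int \<Rightarrow> int \<Rightarrow> int \<Rightarrow> int \<Rightarrow> int \<Rightarrow> int \<Rightarrow> bool" where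
  "ZU_meet a x0 y1 c y2 x3 l r yl yr \<longleftrightarrow> (y1 = a \<and> overlap x0 c l r) \<or> (y2 = a \<and> overlap c x3 l r)
     \<or> (c = l \<and> overlap y1 y2 yl a) \<or> (c = r \<and> overlap y1 y2 a yr)"

lemma Z_U_share_edge_iff:
  assumes "Z_form pu x0 y1 c y2 x3" "U_form a px l r yl yr"
  shows "path_edges pu \<inter> path_edges px \<noteq> {} \<longleftrightarrow> ZU_meet a x0 y1 c y2 x3 l r yl yr"
proof -
  have Z_edges: "path_edges pu = row_edges y1 (min x0 c) (max x0 c) \<union> col_edges c (min y1 y2) (max y1 y2)
      \<union> row_edges y2 (min c x3) (max c x3)"
    using assms(1) by (simp add: Z_form_def)
  have U_edges: "path_edges px = col_edges l (min yl a) (max yl a) \<union> row_edges a l r \<union> col_edges r (min a yr) (max a yr)"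
    and "l < r"
    using assms(2) by (simp_all add: U_form_def)
  then show ?thesis unfolding Z_edges U_edges ZU_meet_def Int_Un_distrib Int_Un_distrib2 Un_empty de_Morgan_conj
    by (auto simp: row_edges_overlap_iff col_edges_overlap_iff row_edges_Int_col_edges
        col_edges_Int_row_edges overlap_def)
qed

lemma U_U_share_edge_iff:
  assumes "U_form a p l r yl yr" "U_form a p' l' r' yl' yr'"
  shows "path_edges p \<inter> path_edges p' \<noteq> {} \<longleftrightarrow>
    max l l' < min r r' \<or> (l = l' \<and> bend_dir a yl = bend_dir a yl') \<or> (l = r' \<and> bend_dir a yl = bend_dir a yr')
     \<or> (r = l' \<and> bend_dir a yr = bend_dir a yl') \<or> (r = r' \<and> bend_dir a yr = bend_dir a yr')"
proof -
  have edges: "path_edges p = col_edges l (min yl a) (max yl a) \<union> row_edges a l r \<union> col_edges r (min a yr) (max a yr)"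
    and edges': "path_edges p' = col_edges l' (min yl' a) (max yl' a) \<union> row_edges a l' r'
      \<union> col_edges r' (min a yr') (max a yr')"
    using assms by (simp_all add: U_form_def)
  have "l < r" "yl \<noteq> a" "yr \<noteq> a" "l' < r'" "yl' \<noteq> a" "yr' \<noteq> a"
    using assms by (simp_all add: U_form_def)
  then show ?thesis unfolding edges edges' Int_Un_distrib Int_Un_distrib2 Un_empty de_Morgan_conj
    by (auto simp: row_edges_overlap_iff col_edges_overlap_iff row_edges_Int_col_edges
        col_edges_Int_row_edges bend_dir_def)
qed

section \<open>Typed intervals met by Z-paths\<close>

lemma overlap_from_row_iff:
  assumes "y \<noteq> a" "y' \<noteq> a"
  shows "overlap a y y' a \<longleftrightarrow> bend_dir a y = bend_dir a y'"
    and "overlap a y a y' \<longleftrightarrow> bend_dir a y = bend_dir a y'"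
  using assms unfolding overlap_def bend_dir_def by (auto simp: min_def max_def)

lemma ZU_meet_on_row_iff:
  assumes "y2 \<noteq> a" "yl \<noteq> a" "yr \<noteq> a"
  shows "ZU_meet a x0 a c y2 x3 l r yl yr \<longleftrightarrow>
    overlap x0 c l r \<or> (c = l \<and> bend_dir a y2 = bend_dir a yl) \<or> (c = r \<and> bend_dir a y2 = bend_dir a yr)"
  using assms overlap_from_row_iff[of y2 a yl] overlap_from_row_iff[of y2 a yr] unfolding ZU_meet_def by auto

lemma intersects_ti_bent_endsD:
  assumes "intersects_ti (s1, al, s2, be) (p, al', q, be')" "al < be" "s1 \<noteq> TE" "s2 \<noteq> TE"
  shows "max al al' < min be be' \<or> (al < al' \<and> al' < be) \<or> (al < be' \<and> be' < be)
     \<or> (p \<noteq> TE \<and> ((p, al') = (s1, al) \<or> (p, al') = (s2, be)))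
     \<or> (q \<noteq> TE \<and> ((q, be') = (s1, al) \<or> (q, be') = (s2, be)))"
  using assms(1) unfolding intersects_ti_def coh_L_def coh_R_def prod.case
proof (elim disjE)
qed (use assms(2-4) in auto)

lemma Z_col_tproj_endpoints:
  assumes "y1 \<noteq> y2"
  shows "\<exists>s1 s2. Z_col_tproj x0 y1 c y2 x3 = (s1, - max y1 y2, s2, - min y1 y2) \<and> s1 \<noteq> TE \<and> s2 \<noteq> TE
     \<and> (\<forall>s g. (s, g) = (s1, - max y1 y2) \<or> (s, g) = (s2, - min y1 y2) \<longleftrightarrow>
          (g = -y1 \<and> s = (if x0 < c then TD else TU)) \<or> (g = -y2 \<and> s = (if x3 < c then TD else TU)))"
  using assms unfolding Z_col_tproj_def Let_def by (cases "y2 \<le> y1") auto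

lemma intersects_Z_col_tprojD:
  assumes "y1 \<noteq> y2" and "intersects_ti (Z_col_tproj x0 y1 c y2 x3) (p, al', q, be')"
  shows "max (- max y1 y2) al' < min (- min y1 y2) be' \<or> (- max y1 y2 < al' \<and> al' < - min y1 y2)
     \<or> (- max y1 y2 < be' \<and> be' < - min y1 y2)
     \<or> (p \<noteq> TE \<and> ((al' = -y1 \<and> p = (if x0 < c then TD else TU)) \<or> (al' = -y2 \<and> p = (if x3 < c then TD else TU))))
     \<or> (q \<noteq> TE \<and> ((be' = -y1 \<and> q = (if x0 < c then TD else TU)) \<or> (be' = -y2 \<and> q = (if x3 < c then TD else TU))))"
proof -
  obtain s1 s2 where tp: "Z_col_tproj x0 y1 c y2 x3 = (s1, - max y1 y2, s2, - min y1 y2)" "s1 \<noteq> TE" "s2 \<noteq> TE"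
    and ends: "\<forall>s g. (s, g) = (s1, - max y1 y2) \<or> (s, g) = (s2, - min y1 y2) \<longleftrightarrow>
          (g = -y1 \<and> s = (if x0 < c then TD else TU)) \<or> (g = -y2 \<and> s = (if x3 < c then TD else TU))"
    using Z_col_tproj_endpoints[OF assms(1)] by blast
  have "- max y1 y2 < - min y1 y2" using assms(1) by (simp add: min_def max_def)
  from intersects_ti_bent_endsD[OF assms(2)[unfolded tp(1)] this tp(2,3)]
  show ?thesis using ends[rule_format, of p al'] ends[rule_format, of q be'] by blast
qed

lemma overlap_at_bend:
  assumes "l < r" "x0 \<noteq> c" "t = (if x0 < c then TD else TU)" "t = TU \<longrightarrow> c = l" "t = TD \<longrightarrow> c = r"
  shows "overlap x0 c l r"
proof (cases "x0 < c")
  case True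
  then have "t = TD" by (simp add: assms(3))
  with assms(5) have "c = r" by blast
  with True assms(1) show ?thesis unfolding overlap_def by auto
next
  case False
  then have "t = TU" by (simp add: assms(3))
  with assms(4) have "c = l" by blast
  with False assms(1,2) show ?thesis unfolding overlap_def by auto
qed

lemma ZU_meet_if_col_or_bend:
  assumes "c = l \<or> c = r" "l < r" "t = TU \<longrightarrow> c = l" "t = TD \<longrightarrow> c = r \<and> c \<noteq> l" "x0 \<noteq> c" "x3 \<noteq> c"
    and "overlap y1 y2 (if c = l then yl else yr) a
      \<or> (a = y1 \<and> t = (if x0 < c then TD else TU)) \<or> (a = y2 \<and> t = (if x3 < c then TD else TU))"
  shows "ZU_meet a x0 y1 c y2 x3 l r yl yr"
  using assms(7)
proof (elim disjE conjE)
  assume ov: "overlap y1 y2 (if c = l then yl else yr) a"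
  show ?thesis
  proof (cases "c = l")
    case True
    with ov show ?thesis unfolding ZU_meet_def by simp
  next
    case False
    with ov assms(1) have "c = r" "overlap y1 y2 a yr" by (simp_all add: overlap_swap)
    then show ?thesis unfolding ZU_meet_def by blast
  qed
next
  assume "a = y1" "t = (if x0 < c then TD else TU)"
  then have "overlap x0 c l r"
    by (intro overlap_at_bend[OF assms(2,5) _ assms(3)]) (use assms(4) in blast)+
  with \<open>a = y1\<close> show ?thesis unfolding ZU_meet_def by blast
next
  assume "a = y2" "t = (if x3 < c then TD else TU)"
  then have "overlap x3 c l r"
    by (intro overlap_at_bend[OF assms(2,6) _ assms(3)]) (use assms(4) in blast)+
  with \<open>a = y2\<close> show ?thesis unfolding ZU_meet_def by (simp add: overlap_swap)
qed

text \<open>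
  Column coordinates are negated rows (see \<open>rot\<close>), so on a vertical typed interval the
  type \<open>TU\<close> points to the right and \<open>TD\<close> to the left, and \<open>(t, -a, TE, -M)\<close> with
  \<open>M < a\<close> is the part of the column from row \<open>a\<close> down to row \<open>M\<close>.
\<close>

lemma overlap_if_intersects_down:
  fixes f M a lo hi :: int
  assumes "f \<le> M" "M < a" "lo < hi"
    "max (-hi) (-a) < min (-lo) (-M) \<or> (-hi < -a \<and> -a < -lo) \<or> (-hi < -M \<and> -M < -lo)"
  shows "overlap lo hi f a"
proof -
  have "f < a" using assms(1,2) by linarith
  then have "min f a = f" "max f a = a" "min lo hi = lo" "max lo hi = hi" using assms(3) by simp_all
  then show ?thesis using assms(1-4) unfolding overlap_def by auto
qed

lemma overlap_if_intersects_up: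
  fixes f M a lo hi :: int
  assumes "M \<le> f" "a < M" "lo < hi"
    "max (-hi) (-M) < min (-lo) (-a) \<or> (-hi < -M \<and> -M < -lo) \<or> (-hi < -a \<and> -a < -lo)"
  shows "overlap lo hi f a"
proof -
  have "a < f" using assms(1,2) by linarith
  then have "min f a = a" "max f a = f" "min lo hi = lo" "max lo hi = hi" using assms(3) by simp_all
  then show ?thesis using assms(1-4) unfolding overlap_def by auto
qed

lemma overlap_if_between:
  fixes f a lo hi :: int
  assumes "lo < a" "a < hi" "f \<noteq> a"
  shows "overlap lo hi f a"
  using assms unfolding overlap_def by (auto simp: min_def max_def)

lemma ZU_meet_if_intersects_down_iv:
  assumes "c = l \<or> c = r" "l < r" "(if c = l then yl else yr) \<le> M" "M < a"
    "t = TU \<longrightarrow> c = l" "t = TD \<longrightarrow> c = r \<and> c \<noteq> l" "x0 \<noteq> c" "y1 \<noteq> y2" "x3 \<noteq> c"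
    "intersects_ti (Z_col_tproj x0 y1 c y2 x3) (t, -a, TE, -M)"
  shows "ZU_meet a x0 y1 c y2 x3 l r yl yr"
proof -
  have "min y1 y2 < max y1 y2" using assms(8) by (auto simp: min_def max_def)
  from overlap_if_intersects_down[OF assms(3,4) this] have "overlap y1 y2 (if c = l then yl else yr) a
      \<or> (a = y1 \<and> t = (if x0 < c then TD else TU)) \<or> (a = y2 \<and> t = (if x3 < c then TD else TU))"
    using intersects_Z_col_tprojD[OF assms(8,10)] by (auto simp: overlap_min_max)
  then show ?thesis by (rule ZU_meet_if_col_or_bend[OF assms(1,2,5,6,7,9)])
qed

lemma ZU_meet_if_intersects_up_iv:
  assumes "c = l \<or> c = r" "l < r" "M \<le> (if c = l then yl else yr)" "a < M"
    "t = TU \<longrightarrow> c = l" "t = TD \<longrightarrow> c = r \<and> c \<noteq> l" "x0 \<noteq> c" "y1 \<noteq> y2" "x3 \<noteq> c"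
    "intersects_ti (Z_col_tproj x0 y1 c y2 x3) (TE, -M, t, -a)"
  shows "ZU_meet a x0 y1 c y2 x3 l r yl yr"
proof -
  have "min y1 y2 < max y1 y2" using assms(8) by (auto simp: min_def max_def)
  from overlap_if_intersects_up[OF assms(3,4) this] have "overlap y1 y2 (if c = l then yl else yr) a
      \<or> (a = y1 \<and> t = (if x0 < c then TD else TU)) \<or> (a = y2 \<and> t = (if x3 < c then TD else TU))"
    using intersects_Z_col_tprojD[OF assms(8,10)] by (auto simp: overlap_min_max)
  then show ?thesis by (rule ZU_meet_if_col_or_bend[OF assms(1,2,5,6,7,9)])
qed

lemma ZU_meet_if_intersects_point_iv:
  assumes "c = l \<or> c = r" "l < r" "(if c = l then yl else yr) \<noteq> a" "t \<noteq> TE"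
    "t = TU \<longrightarrow> c = l" "t = TD \<longrightarrow> c = r \<and> c \<noteq> l" "x0 \<noteq> c" "y1 \<noteq> y2" "x3 \<noteq> c"
    "intersects_ti (Z_col_tproj x0 y1 c y2 x3) (t, -a, t, -a)"
  shows "ZU_meet a x0 y1 c y2 x3 l r yl yr"
proof -
  have "overlap (min y1 y2) (max y1 y2) (if c = l then yl else yr) a" if "min y1 y2 < a" "a < max y1 y2"
    using overlap_if_between[OF that assms(3)] .
  then have "overlap y1 y2 (if c = l then yl else yr) a
      \<or> (a = y1 \<and> t = (if x0 < c then TD else TU)) \<or> (a = y2 \<and> t = (if x3 < c then TD else TU))"
    using intersects_Z_col_tprojD[OF assms(8,10)] assms(4) by (auto simp: overlap_min_max)
  then show ?thesis by (rule ZU_meet_if_col_or_bend[OF assms(1,2,5,6,7,9)])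
qed

lemma contains_down_iv:
  "f \<le> M \<Longrightarrow> M < a \<Longrightarrow> tx \<noteq> TE \<Longrightarrow> (t \<noteq> TE \<longrightarrow> t = tx) \<Longrightarrow>
   contains_ti (tx, -a, TE, -f) (t, -a, TE, -M)"
  unfolding contains_ti_def coh_L_def coh_R_def by (cases t) auto

lemma contains_up_iv:
  "M \<le> f \<Longrightarrow> a < M \<Longrightarrow> tx \<noteq> TE \<Longrightarrow> (t \<noteq> TE \<longrightarrow> t = tx) \<Longrightarrow>
   contains_ti (TE, -f, tx, -a) (TE, -M, t, -a)"
  unfolding contains_ti_def coh_L_def coh_R_def by (cases t) auto

lemma contains_point_iv:
  "f \<noteq> a \<Longrightarrow> tx \<noteq> TE \<Longrightarrow>
   contains_ti (if a < f then (TE, -f, tx, -a) else (tx, -a, TE, -f)) (tx, -a, tx, -a)"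
  unfolding contains_ti_def coh_L_def coh_R_def by auto

section \<open>Cliques of U-vertices on a common row\<close>

definition agreed_type :: "'a set \<Rightarrow> ('a \<Rightarrow> ttype) \<Rightarrow> ttype" where
  "agreed_type A f = (if \<forall>x\<in>A. f x = TD then TD else if \<forall>x\<in>A. f x = TU then TU else TE)"

lemma agreed_type_eq_iff:
  assumes "A \<noteq> {}" "d \<noteq> TE"
  shows "agreed_type A f = d \<longleftrightarrow> (\<forall>x\<in>A. f x = d)"
  using assms unfolding agreed_type_def by (cases d) auto

lemma agreed_typeD: "agreed_type A f \<noteq> TE \<Longrightarrow> x \<in> A \<Longrightarrow> f x = agreed_type A f"
  unfolding agreed_type_def by (auto split: if_splits)

locale U_clique =
  fixes X :: "'v set" and P :: "'v \<Rightarrow> pt list" and a :: int and l r yl yr :: "'v \<Rightarrow> int"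
  assumes finite_X: "finite X" and X_nonempty: "X \<noteq> {}"
    and U_forms: "\<And>x. x \<in> X \<Longrightarrow> U_form a (P x) (l x) (r x) (yl x) (yr x)"
    and pairwise_share_edge: "\<And>x y. x \<in> X \<Longrightarrow> y \<in> X \<Longrightarrow> x \<noteq> y \<Longrightarrow> path_edges (P x) \<inter> path_edges (P y) \<noteq> {}"
begin

lemma l_less_r: "x \<in> X \<Longrightarrow> l x < r x"
  and yl_neq: "x \<in> X \<Longrightarrow> yl x \<noteq> a"
  and yr_neq: "x \<in> X \<Longrightarrow> yr x \<noteq> a"
  using U_forms by (auto simp: U_form_def)

lemma pairwise_meet:
  assumes "x \<in> X" "y \<in> X" "x \<noteq> y"
  shows "max (l x) (l y) < min (r x) (r y) \<or> (l x = l y \<and> bend_dir a (yl x) = bend_dir a (yl y))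
      \<or> (l x = r y \<and> bend_dir a (yl x) = bend_dir a (yr y)) \<or> (r x = l y \<and> bend_dir a (yr x) = bend_dir a (yl y))
      \<or> (r x = r y \<and> bend_dir a (yr x) = bend_dir a (yr y))"
  using U_U_share_edge_iff[OF U_forms U_forms] pairwise_share_edge assms by blast

definition "lmax = Max (l ` X)"
definition "rmin = Min (r ` X)"
definition "ltype = agreed_type {x\<in>X. l x = lmax} (\<lambda>x. bend_dir a (yl x))"
definition "rtype = agreed_type {x\<in>X. r x = rmin} (\<lambda>x. bend_dir a (yr x))"
definition "hor_iv = (ltype, lmax, rtype, rmin)"

lemma l_le_lmax: "x \<in> X \<Longrightarrow> l x \<le> lmax"
  unfolding lmax_def using finite_X by simp

lemma lmax_attained: obtains x where "x \<in> X" "l x = lmax"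
proof -
  have "Max (l ` X) \<in> l ` X" using finite_X X_nonempty by (intro Max_in) auto
  then show thesis using that unfolding lmax_def by auto
qed

lemma rmin_le_r: "x \<in> X \<Longrightarrow> rmin \<le> r x"
  unfolding rmin_def using finite_X by simp

lemma rmin_attained: obtains x where "x \<in> X" "r x = rmin"
proof -
  have "Min (r ` X) \<in> r ` X" using finite_X X_nonempty by (intro Min_in) auto
  then show thesis using that unfolding rmin_def by auto
qed

lemma ltypeD: "ltype \<noteq> TE \<Longrightarrow> x \<in> X \<Longrightarrow> l x = lmax \<Longrightarrow> bend_dir a (yl x) = ltype"
  unfolding ltype_def by (rule agreed_typeD) auto

lemma rtypeD: "rtype \<noteq> TE \<Longrightarrow> x \<in> X \<Longrightarrow> r x = rmin \<Longrightarrow> bend_dir a (yr x) = rtype"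
  unfolding rtype_def by (rule agreed_typeD) auto

lemma ltypeI:
  assumes "\<And>x. x \<in> X \<Longrightarrow> l x = lmax \<Longrightarrow> bend_dir a (yl x) = d" "d \<noteq> TE"
  shows "ltype = d"
proof -
  obtain x0 where "x0 \<in> X" "l x0 = lmax" by (rule lmax_attained)
  then show ?thesis unfolding ltype_def using assms by (subst agreed_type_eq_iff) auto
qed

lemma rtypeI:
  assumes "\<And>x. x \<in> X \<Longrightarrow> r x = rmin \<Longrightarrow> bend_dir a (yr x) = d" "d \<noteq> TE"
  shows "rtype = d"
proof -
  obtain x0 where "x0 \<in> X" "r x0 = rmin" by (rule rmin_attained)
  then show ?thesis unfolding rtype_def using assms by (subst agreed_type_eq_iff) auto
qed

lemma lmax_le_rmin: "lmax \<le> rmin"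
proof (rule ccontr)
  assume less: "\<not> lmax \<le> rmin"
  obtain x where x: "x \<in> X" "l x = lmax" by (rule lmax_attained)
  obtain y where y: "y \<in> X" "r y = rmin" by (rule rmin_attained)
  have "x \<noteq> y" using x y l_less_r less by force
  from pairwise_meet[OF x(1) y(1) this] show False
    using x y l_less_r[OF x(1)] l_less_r[OF y(1)] less l_le_lmax[OF y(1)] rmin_le_r[OF x(1)] by auto
qed

text \<open>
  When \<open>lmax = rmin\<close>, a vertex attaining \<open>lmax\<close> and one attaining \<open>rmin\<close> share no edge of row
  \<open>a\<close>, so they meet on the common column and bend the same way there.
\<close>

lemma point_hor_iv_types:
  assumes "lmax = rmin"
  shows "ltype \<noteq> TE \<and> ltype = rtype"
proof -
  obtain x0 where x0: "x0 \<in> X" "l x0 = lmax" by (rule lmax_attained)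
  obtain y0 where y0: "y0 \<in> X" "r y0 = rmin" by (rule rmin_attained)
  have "x0 \<noteq> y0" using x0 y0 l_less_r assms by force
  from pairwise_meet[OF x0(1) y0(1) this] have d: "bend_dir a (yl x0) = bend_dir a (yr y0)"
    using x0 y0 l_less_r[OF x0(1)] l_less_r[OF y0(1)] assms l_le_lmax[OF y0(1)] rmin_le_r[OF x0(1)] by auto
  have "ltype = bend_dir a (yr y0)"
  proof (rule ltypeI[OF _ bend_dir_neq_TE])
    fix x assume x: "x \<in> X" "l x = lmax"
    have "x \<noteq> y0" using x y0 l_less_r[OF y0(1)] assms by force
    from pairwise_meet[OF x(1) y0(1) this] show "bend_dir a (yl x) = bend_dir a (yr y0)"
      using x y0 l_less_r[OF x(1)] l_less_r[OF y0(1)] assms rmin_le_r[OF x(1)] by auto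
  qed
  moreover have "rtype = bend_dir a (yr y0)"
  proof (rule rtypeI[OF _ bend_dir_neq_TE])
    fix y assume y: "y \<in> X" "r y = rmin"
    have "x0 \<noteq> y" using x0 y l_less_r[OF y(1)] assms by force
    from pairwise_meet[OF x0(1) y(1) this] show "bend_dir a (yr y) = bend_dir a (yr y0)"
      using x0 y l_less_r[OF x0(1)] l_less_r[OF y(1)] assms l_le_lmax[OF y(1)] d by auto
  qed
  ultimately show ?thesis using bend_dir_neq_TE by simp
qed

lemma wf_hor_iv: "wf_tiv hor_iv"
  using lmax_le_rmin by (simp add: hor_iv_def wf_tiv_def)

lemma tproj_row_U: "x \<in> X \<Longrightarrow> tproj_row (P x) a = (bend_dir a (yl x), l x, bend_dir a (yr x), r x)"
  using U_forms by (simp add: U_form_def)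

lemma hor_iv_contained:
  assumes x: "x \<in> X"
  shows "contains_ti (tproj_row (P x) a) hor_iv"
proof -
  have "l x \<le> lmax" "rmin \<le> r x" "l x < r x" "lmax \<le> rmin"
    using l_le_lmax[OF x] rmin_le_r[OF x] l_less_r[OF x] lmax_le_rmin by auto
  then show ?thesis unfolding tproj_row_U[OF x] contains_ti_def coh_L_def coh_R_def hor_iv_def
    using ltypeD[OF _ x] rtypeD[OF _ x] point_hor_iv_types bend_dir_neq_TE[of a "yl x"]
      bend_dir_neq_TE[of a "yr x"]
    by (cases "lmax = rmin") auto
qed

definition "row_meet x0 c y2 x \<longleftrightarrow> overlap x0 c (l x) (r x)
   \<or> (c = l x \<and> bend_dir a y2 = bend_dir a (yl x)) \<or> (c = r x \<and> bend_dir a y2 = bend_dir a (yr x))"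

lemma row_meet_if_intersects_hor_iv:
  assumes x: "x \<in> X" and "x0 \<noteq> c" and "intersects_ti (Z_row_tproj x0 c (bend_dir a y2)) hor_iv"
  shows "row_meet x0 c y2 x"
proof -
  have "l x \<le> lmax" "rmin \<le> r x" "l x < r x" "lmax \<le> rmin"
    using l_le_lmax[OF x] rmin_le_r[OF x] l_less_r[OF x] lmax_le_rmin by auto
  then show ?thesis
    using assms(2,3) ltypeD[OF _ x] rtypeD[OF _ x] point_hor_iv_types bend_dir_neq_TE[of a "yl x"]
      bend_dir_neq_TE[of a "yr x"] bend_dir_neq_TE[of a y2]
    unfolding row_meet_def Z_row_tproj_def intersects_ti_def coh_L_def coh_R_def hor_iv_def overlap_def
    by (cases "lmax = rmin"; cases "x0 \<le> c") (auto split: if_splits)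
qed

lemma lmax_type_if_row_meet:
  assumes meet: "\<forall>x\<in>X. row_meet x0 c y2 x" and left: "max x0 c \<le> lmax"
  shows "c = lmax" and "ltype = bend_dir a y2"
proof -
  obtain x1 where x1: "x1 \<in> X" "l x1 = lmax" by (rule lmax_attained)
  have "row_meet x0 c y2 x1" using meet x1 by blast
  then show c: "c = lmax" using x1 left l_less_r[OF x1(1)]
    unfolding row_meet_def overlap_def by (auto simp: min_def max_def split: if_split_asm)
  show "ltype = bend_dir a y2"
  proof (rule ltypeI[OF _ bend_dir_neq_TE])
    fix x assume x: "x \<in> X" "l x = lmax"
    have "row_meet x0 c y2 x" using meet x(1) by blast
    then show "bend_dir a (yl x) = bend_dir a y2" using x left l_less_r[OF x(1)] c
      unfolding row_meet_def overlap_def by (auto simp: min_def max_def split: if_split_asm)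
  qed
qed

lemma rmin_type_if_row_meet:
  assumes meet: "\<forall>x\<in>X. row_meet x0 c y2 x" and right: "rmin \<le> min x0 c"
  shows "c = rmin" and "rtype = bend_dir a y2"
proof -
  obtain x1 where x1: "x1 \<in> X" "r x1 = rmin" by (rule rmin_attained)
  have "row_meet x0 c y2 x1" using meet x1 by blast
  then show c: "c = rmin" using x1 right l_less_r[OF x1(1)]
    unfolding row_meet_def overlap_def by (auto simp: min_def max_def split: if_split_asm)
  show "rtype = bend_dir a y2"
  proof (rule rtypeI[OF _ bend_dir_neq_TE])
    fix x assume x: "x \<in> X" "r x = rmin"
    have "row_meet x0 c y2 x" using meet x(1) by blast
    then show "bend_dir a (yr x) = bend_dir a y2" using x right l_less_r[OF x(1)] c
      unfolding row_meet_def overlap_def by (auto simp: min_def max_def split: if_split_asm)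
  qed
qed

lemma intersects_hor_iv_if_row_meet_all:
  assumes "x0 \<noteq> c" and meet: "\<forall>x\<in>X. row_meet x0 c y2 x"
  shows "intersects_ti (Z_row_tproj x0 c (bend_dir a y2)) hor_iv"
proof -
  consider (overlap) "max (min x0 c) lmax < min (max x0 c) rmin"
    | (inside) "lmax = rmin" "min x0 c < lmax" "lmax < max x0 c"
    | (left) "max x0 c \<le> lmax" | (right) "rmin \<le> min x0 c"
  proof -
    have "max (min x0 c) lmax < min (max x0 c) rmin \<or> (lmax = rmin \<and> min x0 c < lmax \<and> lmax < max x0 c)
        \<or> max x0 c \<le> lmax \<or> rmin \<le> min x0 c"
      using lmax_le_rmin assms(1) by (cases "x0 \<le> c"; cases "lmax = rmin") (auto simp: min_def max_def)
    then show thesis using that by blast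
  qed
  then show ?thesis
  proof cases
    case overlap then show ?thesis unfolding Z_row_tproj_def intersects_ti_def hor_iv_def
      by (cases "x0 \<le> c") (simp_all add: min_def max_def)
  next
    case inside then show ?thesis unfolding Z_row_tproj_def intersects_ti_def coh_L_def hor_iv_def
      by (cases "x0 \<le> c") (simp_all add: min_def max_def)
  next
    case left
    have "c = lmax" "ltype = bend_dir a y2" using lmax_type_if_row_meet[OF meet left] by blast+
    then show ?thesis using left assms(1) unfolding Z_row_tproj_def intersects_ti_def coh_R_def hor_iv_def
      by (auto simp: bend_dir_neq_TE min_def max_def split: if_splits)
  next
    case right
    have "c = rmin" "rtype = bend_dir a y2" using rmin_type_if_row_meet[OF meet right] by blast+
    then show ?thesis using right assms(1) unfolding Z_row_tproj_def intersects_ti_def coh_L_def hor_iv_def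
      by (auto simp: bend_dir_neq_TE min_def max_def split: if_splits)
  qed
qed

definition "common_cols = {c. \<forall>x\<in>X. c = l x \<or> c = r x}"
definition "far_end c x = (if c = l x then yl x else yr x)"
definition "far_type c = agreed_type X (\<lambda>x. bend_dir a (far_end c x))"
definition "col_type c = (if \<forall>x\<in>X. c = l x then TU else if \<forall>x\<in>X. c = r x then TD else TE)"

text \<open>
  On a common column the vertices of \<open>X\<close> all leave row \<open>a\<close> downwards, all upwards, or in
  both directions; the interval runs from row \<open>a\<close> to the nearest far end in the first two
  cases and is the single point of row \<open>a\<close> in the last one.
\<close>

definition "ver_iv c = (case far_type c of
     TD \<Rightarrow> (col_type c, -a, TE, - Max (far_end c ` X))
   | TU \<Rightarrow> (TE, - Min (far_end c ` X), col_type c, -a)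
   | TE \<Rightarrow> (col_type c, -a, col_type c, -a))"

lemma far_type_eq_iff: "d \<noteq> TE \<Longrightarrow> far_type c = d \<longleftrightarrow> (\<forall>x\<in>X. bend_dir a (far_end c x) = d)"
  unfolding far_type_def by (rule agreed_type_eq_iff[OF X_nonempty])

lemma common_cols_subset: "x \<in> X \<Longrightarrow> common_cols \<subseteq> {l x, r x}"
  unfolding common_cols_def by auto

lemma finite_common_cols: "finite common_cols"
  and card_common_cols: "card common_cols \<le> 2"
proof -
  obtain x where x: "x \<in> X" using X_nonempty by blast
  show "finite common_cols" using common_cols_subset[OF x] finite_subset by blast
  have "card common_cols \<le> card {l x, r x}"
    using common_cols_subset[OF x] by (rule card_mono[rotated]) simp
  also have "\<dots> \<le> 2" by (cases "l x = r x") auto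
  finally show "card common_cols \<le> 2" .
qed

lemma far_end_neq: "x \<in> X \<Longrightarrow> far_end c x \<noteq> a"
  unfolding far_end_def using yl_neq yr_neq by auto

lemma col_type_TU: "col_type c = TU \<Longrightarrow> x \<in> X \<Longrightarrow> c = l x"
  unfolding col_type_def by (auto split: if_splits)

lemma col_type_TD: "col_type c = TD \<Longrightarrow> x \<in> X \<Longrightarrow> c = r x \<and> c \<noteq> l x"
  unfolding col_type_def using l_less_r[of x] by (auto split: if_splits)

lemma col_type_eq: "x \<in> X \<Longrightarrow> col_type c \<noteq> TE \<Longrightarrow> col_type c = (if c = l x then TU else TD)"
  using col_type_TU[of c x] col_type_TD[of c x] by (cases "col_type c") auto

text \<open>
  If \<open>c\<close> is the left column of one vertex of \<open>X\<close> and the right column of another, the two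
  meet only at the point of \<open>c\<close> on row \<open>a\<close>, hence bend the same way there; this propagates
  to all vertices using \<open>c\<close>.
\<close>

lemma col_type_neq_TE_if_mixed:
  assumes c: "c \<in> common_cols" and mixed: "far_type c = TE"
  shows "col_type c \<noteq> TE"
proof
  assume "col_type c = TE"
  then obtain x y where x: "x \<in> X" "c \<noteq> l x" and y: "y \<in> X" "c \<noteq> r y"
    unfolding col_type_def by (auto split: if_splits)
  have x_right: "c = r x" and y_left: "c = l y" using c x y unfolding common_cols_def by auto
  have same: "bend_dir a (yl z) = bend_dir a (yr w)" if "z \<in> X" "w \<in> X" "l z = c" "r w = c" for z w
  proof -
    have "z \<noteq> w" using that l_less_r by force
    from pairwise_meet[OF that(1,2) this] show ?thesis using that l_less_r[OF that(1)] l_less_r[OF that(2)] by auto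
  qed
  have "\<forall>z\<in>X. bend_dir a (far_end c z) = bend_dir a (yr x)"
  proof
    fix z assume z: "z \<in> X"
    show "bend_dir a (far_end c z) = bend_dir a (yr x)"
    proof (cases "c = l z")
      case True then show ?thesis using same[OF z x(1) _ x_right[symmetric]] by (simp add: far_end_def)
    next
      case False
      then have "c = r z" using c z unfolding common_cols_def by auto
      then show ?thesis using same[OF y(1) z y_left[symmetric]] same[OF y(1) x(1) y_left[symmetric] x_right[symmetric]]
        False by (simp add: far_end_def)
    qed
  qed
  then have "far_type c = bend_dir a (yr x)" using far_type_eq_iff[OF bend_dir_neq_TE] by blast
  then show False using mixed by (metis bend_dir_neq_TE)
qed

lemma Max_far_end_less: "far_type c = TD \<Longrightarrow> Max (far_end c ` X) < a"
proof -
  assume "far_type c = TD"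
  then have all: "\<forall>x\<in>X. bend_dir a (far_end c x) = TD" using far_type_eq_iff by simp
  have "Max (far_end c ` X) \<in> far_end c ` X" using finite_X X_nonempty by (intro Max_in) auto
  then obtain z where z: "z \<in> X" "Max (far_end c ` X) = far_end c z" by blast
  with all have "bend_dir a (far_end c z) = TD" by blast
  with z show ?thesis by (simp add: bend_dir_def split: if_splits)
qed

lemma Min_far_end_greater: "far_type c = TU \<Longrightarrow> a < Min (far_end c ` X)"
proof -
  assume "far_type c = TU"
  then have all: "\<forall>x\<in>X. bend_dir a (far_end c x) = TU" using far_type_eq_iff by simp
  have "Min (far_end c ` X) \<in> far_end c ` X" using finite_X X_nonempty by (intro Min_in) auto
  then obtain z where z: "z \<in> X" "Min (far_end c ` X) = far_end c z" by blast
  with all have "bend_dir a (far_end c z) = TU" by blast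
  with z far_end_neq[OF z(1), of c] show ?thesis by (simp add: bend_dir_def split: if_splits)
qed

lemma wf_ver_iv: "wf_tiv (ver_iv c)"
  using Max_far_end_less[of c] Min_far_end_greater[of c]
  by (cases "far_type c") (auto simp: ver_iv_def wf_tiv_def)

lemma tproj_col_U:
  assumes "x \<in> X" "c = l x \<or> c = r x"
  shows "tproj_col (P x) c = (if a < far_end c x then (TE, - far_end c x, if c = l x then TU else TD, -a)
     else (if c = l x then TU else TD, -a, TE, - far_end c x))"
  using U_forms[OF assms(1)] l_less_r[OF assms(1)] assms(2) by (auto simp: U_form_def far_end_def)

lemma ver_iv_contained:
  assumes c: "c \<in> common_cols" and x: "x \<in> X"
  shows "contains_ti (tproj_col (P x) c) (ver_iv c)"
proof -
  let ?tx = "if c = l x then TU else TD"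
  have cx: "c = l x \<or> c = r x" using c x unfolding common_cols_def by auto
  have tx: "?tx \<noteq> TE" by simp
  have te: "col_type c \<noteq> TE \<longrightarrow> col_type c = ?tx" using col_type_eq[OF x] by blast
  have Max: "far_end c x \<le> Max (far_end c ` X)" and Min: "Min (far_end c ` X) \<le> far_end c x"
    using finite_X x by simp_all
  show ?thesis
  proof (cases "far_type c")
    case TD
    with Max have "far_end c x \<le> Max (far_end c ` X)" "Max (far_end c ` X) < a"
      using Max_far_end_less by auto
    with contains_down_iv[OF this tx te] TD show ?thesis by (simp add: ver_iv_def tproj_col_U[OF x cx])
  next
    case TU
    with Min have "Min (far_end c ` X) \<le> far_end c x" "a < Min (far_end c ` X)"
      using Min_far_end_greater by auto
    with contains_up_iv[OF this tx te] TU show ?thesis by (simp add: ver_iv_def tproj_col_U[OF x cx])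
  next
    case TE
    then have "col_type c = ?tx" using te col_type_neq_TE_if_mixed[OF c] by blast
    with contains_point_iv[OF far_end_neq[OF x] tx] TE show ?thesis by (simp add: ver_iv_def tproj_col_U[OF x cx])
  qed
qed

lemma ZU_meet_if_intersects_ver_iv:
  assumes c: "c \<in> common_cols" and x: "x \<in> X" and Z: "x0 \<noteq> c" "y1 \<noteq> y2" "x3 \<noteq> c"
    and int: "intersects_ti (Z_col_tproj x0 y1 c y2 x3) (ver_iv c)"
  shows "ZU_meet a x0 y1 c y2 x3 (l x) (r x) (yl x) (yr x)"
proof -
  have cx: "c = l x \<or> c = r x" using c x unfolding common_cols_def by auto
  have far: "far_end c x = (if c = l x then yl x else yr x)" by (simp add: far_end_def)
  have tU: "col_type c = TU \<longrightarrow> c = l x" and tD: "col_type c = TD \<longrightarrow> c = r x \<and> c \<noteq> l x"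
    using col_type_TU col_type_TD x by blast+
  have Max: "far_end c x \<le> Max (far_end c ` X)" and Min: "Min (far_end c ` X) \<le> far_end c x"
    using finite_X x by simp_all
  show ?thesis
  proof (cases "far_type c")
    case TD
    then have "intersects_ti (Z_col_tproj x0 y1 c y2 x3) (col_type c, -a, TE, - Max (far_end c ` X))"
      using int by (simp add: ver_iv_def)
    with Max Max_far_end_less[OF TD] show ?thesis
      unfolding far by (intro ZU_meet_if_intersects_down_iv[OF cx l_less_r[OF x] _ _ tU tD Z])
  next
    case TU
    then have "intersects_ti (Z_col_tproj x0 y1 c y2 x3) (TE, - Min (far_end c ` X), col_type c, -a)"
      using int by (simp add: ver_iv_def)
    with Min Min_far_end_greater[OF TU] show ?thesis
      unfolding far by (intro ZU_meet_if_intersects_up_iv[OF cx l_less_r[OF x] _ _ tU tD Z])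
  next
    case TE
    then have "intersects_ti (Z_col_tproj x0 y1 c y2 x3) (col_type c, -a, col_type c, -a)"
      using int by (simp add: ver_iv_def)
    with far_end_neq[OF x, of c] col_type_neq_TE_if_mixed[OF c TE] show ?thesis
      unfolding far by (intro ZU_meet_if_intersects_point_iv[OF cx l_less_r[OF x] _ _ tU tD Z])
  qed
qed

lemma intersects_ver_iv_if_ZU_meet_all:
  assumes Z: "x0 \<noteq> c" "y1 \<noteq> y2" "x3 \<noteq> c" and off_row: "y1 \<noteq> a" "y2 \<noteq> a"
    and meet: "\<forall>x\<in>X. ZU_meet a x0 y1 c y2 x3 (l x) (r x) (yl x) (yr x)"
  shows "c \<in> common_cols \<and> intersects_ti (Z_col_tproj x0 y1 c y2 x3) (ver_iv c)"
proof -
  have col_meet: "(c = l x \<and> overlap y1 y2 (yl x) a) \<or> (c = r x \<and> overlap y1 y2 a (yr x))" if "x \<in> X" for x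
    using meet that off_row unfolding ZU_meet_def by auto
  then have c: "c \<in> common_cols" unfolding common_cols_def by blast
  have far: "overlap y1 y2 (far_end c x) a" if x: "x \<in> X" for x
    using col_meet[OF x] l_less_r[OF x] unfolding far_end_def by (auto simp: overlap_swap)
  obtain s1 s2 where tp: "Z_col_tproj x0 y1 c y2 x3 = (s1, - max y1 y2, s2, - min y1 y2)"
    using Z_col_tproj_endpoints[OF Z(2)] by blast
  consider (between) "min y1 y2 < a" "a < max y1 y2" | (above) "a < min y1 y2" | (below) "max y1 y2 < a"
  proof -
    have "(min y1 y2 < a \<and> a < max y1 y2) \<or> a < min y1 y2 \<or> max y1 y2 < a"
      using off_row by (cases "y1 \<le> y2"; simp add: min_def max_def; linarith)
    then show thesis using that by blast
  qed
  then have "intersects_ti (Z_col_tproj x0 y1 c y2 x3) (ver_iv c)"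
  proof cases
    case between
    then show ?thesis unfolding tp intersects_ti_def
      by (cases "far_type c") (simp_all add: ver_iv_def coh_L_def coh_R_def)
  next
    case above
    have gt: "min y1 y2 < far_end c x" if "x \<in> X" for x
      using far[OF that] above unfolding overlap_def by (auto simp: min_def max_def split: if_splits)
    with above have "far_type c = TU" by (force simp: far_type_eq_iff bend_dir_def)
    moreover have "min y1 y2 < Min (far_end c ` X)" using gt finite_X X_nonempty by simp
    ultimately show ?thesis unfolding tp ver_iv_def intersects_ti_def using above Z(2)
      by (auto simp: min_def max_def)
  next
    case below
    have lt: "far_end c x < max y1 y2" if "x \<in> X" for x
      using far[OF that] below unfolding overlap_def by (auto simp: min_def max_def split: if_splits)
    with below have "far_type c = TD" by (force simp: far_type_eq_iff bend_dir_def)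
    moreover have "Max (far_end c ` X) < max y1 y2" using lt finite_X X_nonempty by simp
    ultimately show ?thesis unfolding tp ver_iv_def intersects_ti_def using below Z(2)
      by (auto simp: min_def max_def)
  qed
  with c show ?thesis by blast
qed

definition "witness_set = insert (Hor, a, hor_iv) ((\<lambda>c. (Ver, c, ver_iv c)) ` common_cols)"

lemma witness_set_Hor: "{s\<in>witness_set. fst s = Hor} = {(Hor, a, hor_iv)}"
  unfolding witness_set_def by auto

lemma witness_set_Ver: "{s\<in>witness_set. fst s = Ver} = (\<lambda>c. (Ver, c, ver_iv c)) ` common_cols"
  unfolding witness_set_def by auto

lemma finite_witness_set: "finite witness_set"
  unfolding witness_set_def using finite_common_cols by simp

lemma card_witness_set_Ver: "card {s\<in>witness_set. fst s = Ver} \<le> 2"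
  unfolding witness_set_Ver using card_image_le[OF finite_common_cols] card_common_cols le_trans by blast

lemma card_witness_set: "card witness_set \<le> 3"
proof -
  have "card witness_set \<le> Suc (card ((\<lambda>c. (Ver, c, ver_iv c)) ` common_cols))"
    unfolding witness_set_def using finite_common_cols by (simp add: card_insert_if)
  then show ?thesis using card_witness_set_Ver unfolding witness_set_Ver by simp
qed

lemma wf_witness_set: "s \<in> witness_set \<Longrightarrow> wf_tiv (snd (snd s))"
  unfolding witness_set_def using wf_hor_iv wf_ver_iv by auto

lemma witness_set_contained:
  assumes x: "x \<in> X" and s: "s \<in> witness_set"
  shows "v_contains (P x) s"
proof -
  have "row_index (P x) = {a}" "col_index (P x) = {l x, r x}" using U_forms[OF x] by (simp_all add: U_form_def)
  then show ?thesis using s hor_iv_contained[OF x] ver_iv_contained[OF _ x] common_cols_subset[OF x]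
    unfolding witness_set_def by auto
qed

lemma intersects_witness_set_iff:
  assumes "Z_form pu x0 y1 c y2 x3"
  shows "(\<exists>s\<in>witness_set. v_intersects pu s) \<longleftrightarrow>
    (a \<in> {y1, y2} \<and> intersects_ti (tproj_row pu a) hor_iv)
    \<or> (c \<in> common_cols \<and> intersects_ti (Z_col_tproj x0 y1 c y2 x3) (ver_iv c))"
  using assms unfolding witness_set_def Z_form_def by auto

lemma ZU_meet_all_iff_on_row:
  assumes Z: "Z_form pu x0 a c y2 x3"
  shows "(\<forall>x\<in>X. ZU_meet a x0 a c y2 x3 (l x) (r x) (yl x) (yr x)) \<longleftrightarrow> (\<exists>s\<in>witness_set. v_intersects pu s)"
proof -
  have Zf: "x0 \<noteq> c" "a \<noteq> y2" "x3 \<noteq> c" and tp: "tproj_row pu a = Z_row_tproj x0 c (bend_dir a y2)"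
    using Z by (simp_all add: Z_form_def)
  have row: "ZU_meet a x0 a c y2 x3 (l x) (r x) (yl x) (yr x) \<longleftrightarrow> row_meet x0 c y2 x" if "x \<in> X" for x
    unfolding row_meet_def using ZU_meet_on_row_iff Zf(2) yl_neq yr_neq that by metis
  have "(\<exists>s\<in>witness_set. v_intersects pu s) \<longleftrightarrow> intersects_ti (Z_row_tproj x0 c (bend_dir a y2)) hor_iv
      \<or> (c \<in> common_cols \<and> intersects_ti (Z_col_tproj x0 a c y2 x3) (ver_iv c))"
    using intersects_witness_set_iff[OF Z] tp by simp
  also have "\<dots> \<longleftrightarrow> (\<forall>x\<in>X. ZU_meet a x0 a c y2 x3 (l x) (r x) (yl x) (yr x))"
    using row intersects_hor_iv_if_row_meet_all[OF Zf(1)] row_meet_if_intersects_hor_iv[OF _ Zf(1)]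
      ZU_meet_if_intersects_ver_iv[OF _ _ Zf] by blast
  finally show ?thesis by blast
qed

lemma ZU_meet_all_iff_off_row:
  assumes Z: "Z_form pu x0 y1 c y2 x3" and off_row: "y1 \<noteq> a" "y2 \<noteq> a"
  shows "(\<forall>x\<in>X. ZU_meet a x0 y1 c y2 x3 (l x) (r x) (yl x) (yr x)) \<longleftrightarrow> (\<exists>s\<in>witness_set. v_intersects pu s)"
proof -
  have Zf: "x0 \<noteq> c" "y1 \<noteq> y2" "x3 \<noteq> c" using Z by (simp_all add: Z_form_def)
  have "(\<exists>s\<in>witness_set. v_intersects pu s) \<longleftrightarrow>
      c \<in> common_cols \<and> intersects_ti (Z_col_tproj x0 y1 c y2 x3) (ver_iv c)"
    using intersects_witness_set_iff[OF Z] off_row by simp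
  then show ?thesis
    using intersects_ver_iv_if_ZU_meet_all[OF Zf off_row] ZU_meet_if_intersects_ver_iv[OF _ _ Zf] by blast
qed

lemma Z_share_edge_all_iff:
  assumes "is_B2_path pu" "Z_vertex pu"
  shows "(\<forall>x\<in>X. path_edges pu \<inter> path_edges (P x) \<noteq> {}) \<longleftrightarrow> (\<exists>s\<in>witness_set. v_intersects pu s)"
proof -
  obtain x0 y1 c y2 x3 where Z0: "Z_form pu x0 y1 c y2 x3" using Z_form_exists[OF assms] by blast
  obtain x0 y1 y2 x3 where Z: "Z_form pu x0 y1 c y2 x3" and y2: "y2 \<noteq> a"
  proof (cases "y2 = a")
    case True
    with Z0 have "y1 \<noteq> a" by (auto simp: Z_form_def)
    with Z_form_reverse[OF Z0] show thesis by (rule that)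
  next
    case False
    with Z0 show thesis by (rule that)
  qed
  have "(\<forall>x\<in>X. path_edges pu \<inter> path_edges (P x) \<noteq> {}) \<longleftrightarrow>
      (\<forall>x\<in>X. ZU_meet a x0 y1 c y2 x3 (l x) (r x) (yl x) (yr x))"
    using Z_U_share_edge_iff[OF Z U_forms] by blast
  also have "\<dots> \<longleftrightarrow> (\<exists>s\<in>witness_set. v_intersects pu s)"
    using ZU_meet_all_iff_on_row ZU_meet_all_iff_off_row[OF Z _ y2] Z by (cases "y1 = a") auto
  finally show ?thesis .
qed

end

lemma U_clique_of_epg_clique:
  assumes "finite V" "epg_rep V E P" "X \<subseteq> V" "X \<noteq> {}"
    and "\<forall>u\<in>X. \<forall>v\<in>X. u \<noteq> v \<longrightarrow> E u v"
    and "\<forall>u\<in>X. U_vertex (P u) \<and> row_index (P u) = {a}"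
  obtains l r yl yr where "U_clique X P a l r yl yr"
proof -
  have "\<forall>x\<in>X. \<exists>q. U_form a (P x) (fst q) (fst (snd q)) (fst (snd (snd q))) (snd (snd (snd q)))"
    using U_form_exists assms(2,3,6) by (fastforce simp: epg_rep_def)
  from bchoice[OF this] obtain q
    where forms: "\<forall>x\<in>X. U_form a (P x) (fst (q x)) (fst (snd (q x))) (fst (snd (snd (q x)))) (snd (snd (snd (q x))))"
    by blast
  have "U_clique X P a (\<lambda>x. fst (q x)) (\<lambda>x. fst (snd (q x))) (\<lambda>x. fst (snd (snd (q x)))) (\<lambda>x. snd (snd (snd (q x))))"
  proof
    show "finite X" using finite_subset[OF assms(3,1)] .
    show "X \<noteq> {}" by (rule assms(4))
  next
    fix x assume "x \<in> X"
    with forms show "U_form a (P x) (fst (q x)) (fst (snd (q x))) (fst (snd (snd (q x)))) (snd (snd (snd (q x))))"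
      by blast
  next
    fix x y assume "x \<in> X" "y \<in> X" "x \<noteq> y"
    with assms(2,3,5) show "path_edges (P x) \<inter> path_edges (P y) \<noteq> {}" unfolding epg_rep_def by blast
  qed
  then show thesis by (rule that)
qed

theorem lemma11:
  fixes V :: "'v set" and E :: "'v \<Rightarrow> 'v \<Rightarrow> bool" and P :: "'v \<Rightarrow> pt list"
    and a :: int and X :: "'v set"
  assumes "finite V"
    and "epg_rep V E P"
    and "X \<subseteq> V" and "X \<noteq> {}"
    and "\<forall>u\<in>X. \<forall>v\<in>X. u \<noteq> v \<longrightarrow> E u v"
    and "\<forall>u\<in>X. U_vertex (P u) \<and> row_index (P u) = {a}"
  shows "\<exists>S :: ltiv set. finite S \<and> card S \<le> 3
           \<and> (\<forall>s\<in>S. wf_tiv (snd (snd s)))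
           \<and> (\<exists>t. {s\<in>S. fst s = Hor} = {(Hor, a, t)})
           \<and> card {s\<in>S. fst s = Ver} \<le> 2
           \<and> (\<forall>x\<in>X. \<forall>s\<in>S. v_contains (P x) s)
           \<and> (\<forall>u\<in>V. Z_vertex (P u) \<longrightarrow> ((\<forall>x\<in>X. E u x) \<longleftrightarrow> (\<exists>s\<in>S. v_intersects (P u) s)))"
proof -
  obtain l r yl yr where "U_clique X P a l r yl yr" using U_clique_of_epg_clique[OF assms] .
  then interpret U_clique X P a l r yl yr .
  have "(\<forall>x\<in>X. E u x) \<longleftrightarrow> (\<exists>s\<in>witness_set. v_intersects (P u) s)" if "u \<in> V" "Z_vertex (P u)" for u
  proof -
    have "u \<notin> X" using that(2) assms(6) by (auto simp: Z_vertex_def U_vertex_def)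
    moreover have B2: "is_B2_path (P u)"
      and "\<forall>v\<in>V. u \<noteq> v \<longrightarrow> (E u v \<longleftrightarrow> path_edges (P u) \<inter> path_edges (P v) \<noteq> {})"
      using assms(2) that(1) by (auto simp: epg_rep_def)
    ultimately have "(\<forall>x\<in>X. E u x) \<longleftrightarrow> (\<forall>x\<in>X. path_edges (P u) \<inter> path_edges (P x) \<noteq> {})"
      using assms(3) by auto
    also have "\<dots> \<longleftrightarrow> (\<exists>s\<in>witness_set. v_intersects (P u) s)"
      by (rule Z_share_edge_all_iff[OF B2 that(2)])
    finally show ?thesis .
  qed
  then show ?thesis
    using finite_witness_set card_witness_set wf_witness_set witness_set_Hor card_witness_set_Ver
      witness_set_contained
    by (intro exI[of _ witness_set] conjI exI[of _ hor_iv] ballI impI) simp_all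
qed

end
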